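(* Let $\Gamma$ be a gain operator on $\ell^\infty_+(\mathcal I)$ and suppose that for some $\rho\in\mathcal K_\infty$: (i) the set $\Psi(\Gamma_\rho)$ is cofinal; (ii) $\Gamma_\rho$ satisfies the uniform NJI condition; (iii) there is $M>0$ with $|\mathcal I_i|\le M$ for all $i\in\mathcal I$. Then there exists $\rho'\in\mathcal K_\infty$ such that $\Sigma(\Gamma_{\rho'})$ is GATT.
   Context: Let $\mathcal I$ be a nonempty countable index set; $\ell^\infty_+(\mathcal I)$ is the cone of nonnegative real families $s=(s_i)_{i\in\mathcal I}$ with $\|s\|:=\sup_i|s_i|<\infty$, ordered componentwise. $\mathcal K_\infty$: continuous strictly increasing unbounded $\gamma:\mathbb R_+\to\mathbb R_+$ with $\gamma(0)=0$; such functions act on $\ell^\infty_+(\mathcal I)$ componentwise. For $\mathcal J\subset\mathcal I$, $s_{|\mathcal J}$ agrees with $s$ on $\mathcal J$ and is $0$ elsewhere. Gain operator: for each $i$ a finite (possibly empty) $\mathcal I_i\subset\mathcal I\setminus\{i\}$; directed graph $\mathcal G$ with vertices $\mathcal I$ and edges $ji$, $j\in\mathcal I_i$; a pointwise equicontinuous family $\gamma_{ij}\in\mathcal K_\infty$ ($ji\in E(\mathcal G)$); functions $\mu_i:\ell^\infty_+(\mathcal I)\to[0,\infty]$ with (M1) some $\xi\in\mathcal K_\infty$ has $\mu_i(0)=0$, $\mu_i(s)\ge\xi(\|s\|)$; (M2) $\mu_i$ monotone; (M3) for each finite $\mathcal J$, $\mu_i$ restricted to vectors vanishing off $\mathcal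 J$ is finite-valued and continuous; (M4) for each norm-bounded $A$ and $\varepsilon>0$ there is $\delta>0$ with $\sup_i|\mu_i(s_{|\mathcal I_i})-\mu_i(s^0_{|\mathcal I_i})|\le\varepsilon$ whenever $s^0\in A$, $\|s-s^0\|\le\delta$. $\Gamma_i(s):=\mu_i([\gamma_{ij}(s_j)]_{j\in\mathcal I_i})$ (argument zero outside $\mathcal I_i$). For $\rho\in\mathcal K_\infty$, $\Gamma_\rho:=(\mathrm{id}+\rho)\circ\Gamma$. $\mathcal N^-_i(n)$: vertices $j$ with a directed path from $j$ to $i$ of length at most $n$ ($\mathcal N^-_i(0)=\{i\}$). For a monotone $T$, $\Psi(T):=\{s:T(s)\le s\}$; $\Sigma(T)$ is the system $s^{n+1}=T(s^n)$, GATT if $\|T^n(s)\|\to0$ for all $s$. A set $A$ is cofinal if every $s\in\ell^\infty_+(\mathcal I)$ has some $\hat s\in A$ with $s\le\hat s$. $T$ satisfies the uniform NJI condition if for all $r,\varepsilon>0$ there are $n\in\mathbb N$, $\delta>0$ such that for all $s\in\ell^\infty_+(\mathcal I)$, $i$ with $s_i\ge\varepsilon$, $\|s\|\le r$ there is $j\in\mathcal N^-_i(n)$ with $s_j\ge\delta$ and $T_j(s)<s_j$. *)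

theory Defs
  imports "HOL-Analysis.Analysis"
begin

text \<open>Sequences s = (s_i) over a countable index type 'i are modelled as
  functions 'i => real.  The cone l^infty_+(I):\<close>
definition linf_pos :: "('i \<Rightarrow> real) set" where
  "linf_pos = {s. (\<forall>i. 0 \<le> s i) \<and> bdd_above (range (\<lambda>i. \<bar>s i\<bar>))}"

definition supn :: "('i \<Rightarrow> real) \<Rightarrow> real" where
  "supn s = (SUP i. \<bar>s i\<bar>)"

definition restr :: "('i \<Rightarrow> real) \<Rightarrow> 'i set \<Rightarrow> ('i \<Rightarrow> real)" where
  "restr s J = (\<lambda>j. if j \<in> J then s j else 0)"

text \<open>Class K_infinity (functions on R_+; values off R_+ are irrelevant).\<close>
definition Kinf :: "(real \<Rightarrow> real) \<Rightarrow> bool" where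
  "Kinf g \<longleftrightarrow> continuous_on {0..} g \<and> strict_mono_on {0..} g \<and> g 0 = 0
              \<and> (\<forall>M. \<exists>x\<ge>0. M < g x)"

text \<open>Gain operator data: neighbour sets Ii i (edges j -> i for j in Ii i),
  gains gam i j = gamma_ij, aggregation functions mu i = mu_i with values in [0,infty].\<close>
definition gain_operator ::
  "('i \<Rightarrow> 'i set) \<Rightarrow> ('i \<Rightarrow> 'i \<Rightarrow> real \<Rightarrow> real) \<Rightarrow> ('i \<Rightarrow> ('i \<Rightarrow> real) \<Rightarrow> ereal) \<Rightarrow> bool" where
  "gain_operator Ii gam mu \<longleftrightarrow>
     (\<forall>i. finite (Ii i) \<and> i \<notin> Ii i) \<and>
     (\<forall>i. \<forall>j\<in>Ii i. Kinf (gam i j)) \<and>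
     \<comment> \<open>pointwise equicontinuity of the family gamma_ij\<close>
     (\<forall>x\<ge>0. \<forall>\<epsilon>>0. \<exists>\<delta>>0. \<forall>i. \<forall>j\<in>Ii i. \<forall>y\<ge>0.
         \<bar>x - y\<bar> < \<delta> \<longrightarrow> \<bar>gam i j x - gam i j y\<bar> < \<epsilon>) \<and>
     \<comment> \<open>(M1)\<close>
     (\<exists>\<xi>. Kinf \<xi> \<and> (\<forall>i. mu i (\<lambda>_. 0) = 0 \<and>
          (\<forall>s\<in>linf_pos. ereal (\<xi> (supn s)) \<le> mu i s))) \<and>
     \<comment> \<open>(M2)\<close>
     (\<forall>i. \<forall>s\<in>linf_pos. \<forall>t\<in>linf_pos. (\<forall>k. s k \<le> t k) \<longrightarrow> mu i s \<le> mu i t) \<and>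
     \<comment> \<open>(M3)\<close>
     (\<forall>i J. finite J \<longrightarrow>
        (\<forall>s\<in>linf_pos. (\<forall>k. k \<notin> J \<longrightarrow> s k = 0) \<longrightarrow>
           mu i s \<noteq> \<infinity> \<and>
           (\<forall>\<epsilon>>0. \<exists>\<delta>>0. \<forall>t\<in>linf_pos. (\<forall>k. k \<notin> J \<longrightarrow> t k = 0) \<longrightarrow>
               supn (\<lambda>k. t k - s k) < \<delta> \<longrightarrow>
               \<bar>real_of_ereal (mu i t) - real_of_ereal (mu i s)\<bar> < \<epsilon>))) \<and>
     \<comment> \<open>(M4), norm-bounded sets A taken as balls of radius r\<close>
     (\<forall>r \<epsilon>. 0 < r \<longrightarrow> 0 < \<epsilon> \<longrightarrow> (\<exists>\<delta>>0. \<forall>s0\<in>linf_pos. \<forall>s\<in>linf_pos.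
         supn s0 \<le> r \<longrightarrow> supn (\<lambda>k. s k - s0 k) \<le> \<delta> \<longrightarrow>
         (\<forall>i. \<bar>real_of_ereal (mu i (restr s (Ii i))) - real_of_ereal (mu i (restr s0 (Ii i)))\<bar> \<le> \<epsilon>)))"

definition Gam :: "('i \<Rightarrow> 'i set) \<Rightarrow> ('i \<Rightarrow> 'i \<Rightarrow> real \<Rightarrow> real) \<Rightarrow> ('i \<Rightarrow> ('i \<Rightarrow> real) \<Rightarrow> ereal)
                    \<Rightarrow> ('i \<Rightarrow> real) \<Rightarrow> ('i \<Rightarrow> real)" where
  "Gam Ii gam mu s = (\<lambda>i. real_of_ereal (mu i (\<lambda>j. if j \<in> Ii i then gam i j (s j) else 0)))"

definition Gam_rho :: "(real \<Rightarrow> real) \<Rightarrow> ('i \<Rightarrow> 'i set) \<Rightarrow> ('i \<Rightarrow> 'i \<Rightarrow> real \<Rightarrow> real)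
                    \<Rightarrow> ('i \<Rightarrow> ('i \<Rightarrow> real) \<Rightarrow> ereal) \<Rightarrow> ('i \<Rightarrow> real) \<Rightarrow> ('i \<Rightarrow> real)" where
  "Gam_rho \<rho> Ii gam mu s = (\<lambda>i. Gam Ii gam mu s i + \<rho> (Gam Ii gam mu s i))"

definition Nminus :: "('i \<Rightarrow> 'i set) \<Rightarrow> 'i \<Rightarrow> nat \<Rightarrow> 'i set" where
  "Nminus Ii i n = {j. \<exists>k\<le>n. (j, i) \<in> {(a, b). a \<in> Ii b} ^^ k}"

definition Psi :: "(('i \<Rightarrow> real) \<Rightarrow> ('i \<Rightarrow> real)) \<Rightarrow> ('i \<Rightarrow> real) set" where
  "Psi T = {s\<in>linf_pos. \<forall>i. T s i \<le> s i}"

definition cofinal_set :: "('i \<Rightarrow> real) set \<Rightarrow> bool" where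
  "cofinal_set A \<longleftrightarrow> (\<forall>s\<in>linf_pos. \<exists>t\<in>A. \<forall>i. s i \<le> t i)"

definition GATT :: "(('i \<Rightarrow> real) \<Rightarrow> ('i \<Rightarrow> real)) \<Rightarrow> bool" where
  "GATT T \<longleftrightarrow> (\<forall>s\<in>linf_pos. (\<lambda>n. supn ((T ^^ n) s)) \<longlonglongrightarrow> 0)"

definition uniform_NJI :: "('i \<Rightarrow> 'i set) \<Rightarrow> (('i \<Rightarrow> real) \<Rightarrow> ('i \<Rightarrow> real)) \<Rightarrow> bool" where
  "uniform_NJI Ii T \<longleftrightarrow> (\<forall>r>0. \<forall>\<epsilon>>0. \<exists>n::nat. \<exists>\<delta>>0. \<forall>s\<in>linf_pos. \<forall>i.
      s i \<ge> \<epsilon> \<longrightarrow> supn s \<le> r \<longrightarrow>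
      (\<exists>j\<in>Nminus Ii i n. s j \<ge> \<delta> \<and> T s j < s j))"

end

theory Submission
  imports Defs
begin

text \<open>Halving \<open>\<rho>\<close> turns the strict inequality \<open>\<Gamma>\<^sub>\<rho>(s)\<^sub>j < s\<^sub>j\<close>, which the NJI condition
  provides at some \<open>j\<close> near every large coordinate \<open>i\<close>, into a decrease
  \<open>\<Gamma>\<^bsub>\<rho>/2\<^esub>(s)\<^sub>j \<le> s\<^sub>j - \<eta>\<close> with \<open>\<eta>\<close> depending only on a lower bound \<open>\<delta>\<close> of \<open>s\<^sub>j\<close>.
  From a point \<open>t\<close> of \<open>\<Psi>(\<Gamma>\<^bsub>\<rho>/2\<^esub>)\<close> the orbit of \<open>\<Gamma>\<^bsub>\<rho>/2\<^esub>\<close> decreases; as long as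
  coordinate \<open>i\<close> stays above \<open>\<epsilon>\<close>, every step lowers the sum of the orbit over \<open>N\<^sup>-\<^sub>i(n)\<close>
  by \<open>\<eta>\<close>. That sum starts below \<open>|N\<^sup>-\<^sub>i(n)| \<parallel>t\<parallel>\<close>, and bounded in-degrees bound \<open>|N\<^sup>-\<^sub>i(n)|\<close>
  uniformly in \<open>i\<close>, so after a number of steps independent of \<open>i\<close> all coordinates are
  below \<open>\<epsilon>\<close>. Cofinality of \<open>\<Psi>(\<Gamma>\<^sub>\<rho>) \<subseteq> \<Psi>(\<Gamma>\<^bsub>\<rho>/2\<^esub>)\<close> and monotonicity extend this to
  all initial states.\<close>

lemma Kinf_nonneg: "Kinf g \<Longrightarrow> 0 \<le> x \<Longrightarrow> 0 \<le> g x"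
  unfolding Kinf_def strict_mono_on_def
  by (metis atLeast_iff order.order_iff_strict order_refl)

lemma Kinf_pos: "Kinf g \<Longrightarrow> 0 < x \<Longrightarrow> 0 < g x"
  unfolding Kinf_def strict_mono_on_def by (metis atLeast_iff order_less_imp_le order_refl)

lemma Kinf_mono: "Kinf g \<Longrightarrow> 0 \<le> x \<Longrightarrow> x \<le> y \<Longrightarrow> g x \<le> g y"
  unfolding Kinf_def strict_mono_on_def
  by (metis atLeast_iff order.order_iff_strict order_trans)

lemma Kinf_divide:
  assumes "Kinf g" "0 < c"
  shows "Kinf (\<lambda>x. g x / c)"
  unfolding Kinf_def
proof (intro conjI allI)
  show "continuous_on {0..} (\<lambda>x. g x / c)"
    using assms unfolding Kinf_def by (intro continuous_intros) auto
  show "strict_mono_on {0..} (\<lambda>x. g x / c)"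
    using assms unfolding Kinf_def strict_mono_on_def by (simp add: divide_strict_right_mono)
  show "g 0 / c = 0"
    using assms unfolding Kinf_def by simp
  fix B :: real
  obtain x where "x \<ge> 0" "c * B < g x"
    using assms unfolding Kinf_def by blast
  then show "\<exists>x\<ge>0. B < g x / c"
    using assms(2) by (auto simp: field_simps)
qed

lemma Kinf_half_step_descent:
  assumes "Kinf \<rho>" "0 < \<delta>" "\<delta> \<le> x" "0 \<le> g" "g + \<rho> g < x"
  shows "g + \<rho> g / 2 \<le> x - min (\<rho> (\<delta> / 2) / 2) (\<delta> / 4)"
proof (cases "\<delta> / 2 \<le> g")
  case True
  then have "\<rho> (\<delta> / 2) \<le> \<rho> g"
    using Kinf_mono[OF assms(1)] assms(2) by simp
  then show ?thesis
    using assms(5) by linarith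
next
  case False
  then show ?thesis
    using assms(3,5) by linarith
qed

lemma le_nat_ceiling: "real n \<le> x \<Longrightarrow> n \<le> nat \<lceil>x\<rceil>"
  using real_nat_ceiling_ge[of x] by linarith

lemma linf_pos_nonneg: "s \<in> linf_pos \<Longrightarrow> 0 \<le> s i"
  by (simp add: linf_pos_def)

lemma supn_upper: "s \<in> linf_pos \<Longrightarrow> \<bar>s i\<bar> \<le> supn s"
  unfolding linf_pos_def supn_def by (auto intro: cSUP_upper)

lemma supn_nonneg: "s \<in> linf_pos \<Longrightarrow> 0 \<le> supn s"
  using supn_upper[of s undefined] by linarith

lemma supn_least: "(\<And>i. \<bar>s i\<bar> \<le> c) \<Longrightarrow> supn s \<le> c"
  unfolding supn_def by (rule cSUP_least) auto

lemma dominated_le_supn: "(\<And>i. 0 \<le> s i) \<Longrightarrow> s \<le> t \<Longrightarrow> t \<in> linf_pos \<Longrightarrow> \<bar>s i\<bar> \<le> supn t"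
  by (metis abs_of_nonneg le_fun_def order_trans supn_upper)

lemma supn_mono: "(\<And>i. 0 \<le> s i) \<Longrightarrow> s \<le> t \<Longrightarrow> t \<in> linf_pos \<Longrightarrow> supn s \<le> supn t"
  by (rule supn_least) (rule dominated_le_supn)

lemma linf_pos_dominated:
  assumes "\<And>i. 0 \<le> s i" "s \<le> t" "t \<in> linf_pos"
  shows "s \<in> linf_pos"
proof -
  have "bdd_above (range (\<lambda>i. \<bar>s i\<bar>))"
    using dominated_le_supn[OF assms] by (rule bdd_aboveI2)
  then show ?thesis
    using assms(1) by (simp add: linf_pos_def)
qed

lemma sum_descent_steps_bound:
  fixes v :: "nat \<Rightarrow> 'i \<Rightarrow> real"
  assumes "finite S" and nonneg: "\<And>m j. 0 \<le> v m j"
    and decreasing: "\<And>m j. v (Suc m) j \<le> v m j" and bound: "\<And>j. v 0 j \<le> r"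
    and descent: "\<And>m. m < N \<Longrightarrow> \<exists>j\<in>S. v (Suc m) j \<le> v m j - \<eta>"
  shows "real N * \<eta> \<le> real (card S) * r"
proof -
  have step: "sum (v (Suc m)) S \<le> sum (v m) S - \<eta>" if "m < N" for m
  proof -
    obtain j where j: "j \<in> S" "v (Suc m) j \<le> v m j - \<eta>"
      using descent[OF \<open>m < N\<close>] by blast
    have "sum (v (Suc m)) (S - {j}) \<le> sum (v m) (S - {j})"
      using decreasing by (rule sum_mono)
    then show ?thesis
      using j sum.remove[OF \<open>finite S\<close> j(1)] by (metis add_mono diff_add_eq)
  qed
  have total: "sum (v m) S \<le> sum (v 0) S - real m * \<eta>" if "m \<le> N" for m
    using that
  proof (induction m)
    case (Suc m)
    then show ?case
      using step[of m] by (simp add: algebra_simps)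
  qed simp
  have "sum (v 0) S \<le> real (card S) * r"
    using sum_bounded_above[of S "v 0" r] bound by simp
  moreover have "0 \<le> sum (v N) S"
    using nonneg by (simp add: sum_nonneg)
  ultimately show ?thesis
    using total[of N] by linarith
qed

lemma Nminus_0: "Nminus Ii i 0 = {i}"
  unfolding Nminus_def by auto

lemma Nminus_Suc_subset: "Nminus Ii i (Suc n) \<subseteq> insert i (\<Union>m\<in>Ii i. Nminus Ii m n)"
proof
  fix j
  assume "j \<in> Nminus Ii i (Suc n)"
  then obtain k where k: "k \<le> Suc n" "(j, i) \<in> {(a, b). a \<in> Ii b} ^^ k"
    unfolding Nminus_def by blast
  show "j \<in> insert i (\<Union>m\<in>Ii i. Nminus Ii m n)"
  proof (cases k)
    case 0
    then show ?thesis using k by simp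
  next
    case (Suc k')
    with k obtain m where "(j, m) \<in> {(a, b). a \<in> Ii b} ^^ k'" "m \<in> Ii i"
      by (auto elim: relpow_Suc_E)
    moreover have "k' \<le> n"
      using k Suc by simp
    ultimately show ?thesis
      unfolding Nminus_def by blast
  qed
qed

lemma Nminus_card_bound:
  assumes finite: "\<And>i. finite (Ii i)" and degree: "\<And>i. card (Ii i) \<le> D"
  shows "\<exists>C. \<forall>i. finite (Nminus Ii i n) \<and> card (Nminus Ii i n) \<le> C"
proof (induction n)
  case 0
  show ?case by (auto simp: Nminus_0)
next
  case (Suc n)
  then obtain C where C: "\<And>i. finite (Nminus Ii i n) \<and> card (Nminus Ii i n) \<le> C"
    by blast
  have "finite (Nminus Ii i (Suc n)) \<and> card (Nminus Ii i (Suc n)) \<le> Suc (D * C)" for i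
  proof -
    let ?U = "\<Union>m\<in>Ii i. Nminus Ii m n"
    have "finite ?U"
      using finite C by auto
    have "card ?U \<le> (\<Sum>m\<in>Ii i. card (Nminus Ii m n))"
      using finite card_UN_le by blast
    also have "\<dots> \<le> card (Ii i) * C"
      using sum_bounded_above[of "Ii i" "\<lambda>m. card (Nminus Ii m n)" C] C by simp
    also have "\<dots> \<le> D * C"
      using degree by simp
    finally have "card (insert i ?U) \<le> Suc (D * C)"
      using card_insert_le_m1 \<open>finite ?U\<close> by (simp add: card_insert_if)
    moreover have "finite (insert i ?U)"
      using \<open>finite ?U\<close> by simp
    ultimately show ?thesis
      using Nminus_Suc_subset card_mono finite_subset order_trans by metis
  qed
  then show ?case by blast
qed

definition uniform_descent_below :: "(('i \<Rightarrow> real) \<Rightarrow> ('i \<Rightarrow> real)) \<Rightarrow> ('i \<Rightarrow> real) \<Rightarrow> bool" where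
  "uniform_descent_below T t \<longleftrightarrow>
     (\<forall>\<epsilon>>0. \<exists>\<eta>>0. \<exists>C::nat. \<forall>i. \<exists>S. finite S \<and> card S \<le> C \<and>
        (\<forall>s\<in>linf_pos. s \<le> t \<longrightarrow> \<epsilon> \<le> s i \<longrightarrow> (\<exists>j\<in>S. T s j \<le> s j - \<eta>)))"

lemma funpow_linf_pos:
  fixes T :: "('i \<Rightarrow> real) \<Rightarrow> ('i \<Rightarrow> real)"
  assumes "T ` linf_pos \<subseteq> linf_pos" "s \<in> linf_pos"
  shows "(T ^^ n) s \<in> linf_pos"
  using assms by (induction n) auto

lemma funpow_mono_on_linf_pos:
  fixes T :: "('i \<Rightarrow> real) \<Rightarrow> ('i \<Rightarrow> real)"
  assumes "mono_on linf_pos T" "T ` linf_pos \<subseteq> linf_pos"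
  shows "mono_on linf_pos (T ^^ n)"
proof (induction n)
  case 0
  show ?case by (simp add: mono_on_def)
next
  case (Suc n)
  show ?case
  proof (rule mono_onI)
    fix r s :: "'i \<Rightarrow> real"
    assume "r \<in> linf_pos" "s \<in> linf_pos" "r \<le> s"
    with Suc.IH have "(T ^^ n) r \<le> (T ^^ n) s"
      by (rule mono_onD)
    then show "(T ^^ Suc n) r \<le> (T ^^ Suc n) s"
      using mono_onD[OF assms(1)] funpow_linf_pos[OF assms(2)] \<open>r \<in> linf_pos\<close> \<open>s \<in> linf_pos\<close>
      by simp
  qed
qed

lemma Psi_orbit_decreasing:
  fixes T :: "('i \<Rightarrow> real) \<Rightarrow> ('i \<Rightarrow> real)"
  assumes mono: "mono_on linf_pos T" and self: "T ` linf_pos \<subseteq> linf_pos"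
    and t: "t \<in> Psi T"
  shows "(T ^^ Suc n) t \<le> (T ^^ n) t"
proof (induction n)
  case 0
  show ?case
    using t by (simp add: Psi_def le_fun_def)
next
  case (Suc n)
  have "t \<in> linf_pos"
    using t by (simp add: Psi_def)
  then have "(T ^^ Suc n) t \<in> linf_pos" "(T ^^ n) t \<in> linf_pos"
    using funpow_linf_pos[OF self] by blast+
  then show ?case
    using mono_onD[OF mono _ _ Suc.IH] by simp
qed

lemma Psi_orbit_steps_bound:
  fixes T :: "('i \<Rightarrow> real) \<Rightarrow> ('i \<Rightarrow> real)"
  assumes mono: "mono_on linf_pos T" and self: "T ` linf_pos \<subseteq> linf_pos"
    and t: "t \<in> Psi T" and "finite S"
    and descent: "\<And>s. s \<in> linf_pos \<Longrightarrow> s \<le> t \<Longrightarrow> \<epsilon> \<le> s i \<Longrightarrow> \<exists>j\<in>S. T s j \<le> s j - \<eta>"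
    and large: "\<epsilon> \<le> (T ^^ n) t i"
  shows "real n * \<eta> \<le> real (card S) * supn t"
proof -
  have "t \<in> linf_pos"
    using t by (simp add: Psi_def)
  define v where "v m = (T ^^ m) t" for m
  have v_linf_pos: "v m \<in> linf_pos" for m
    unfolding v_def using funpow_linf_pos[OF self \<open>t \<in> linf_pos\<close>] .
  have "v (Suc m) \<le> v m" for m
    unfolding v_def by (rule Psi_orbit_decreasing[OF mono self t])
  then have v_antimono: "v m' \<le> v m" if "m \<le> m'" for m m'
    by (rule lift_Suc_antimono_le) (rule that)
  show ?thesis
  proof (rule sum_descent_steps_bound[where v = v, OF \<open>finite S\<close>])
    show "0 \<le> v m j" for m j
      using v_linf_pos by (rule linf_pos_nonneg)
    show "v (Suc m) j \<le> v m j" for m j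
      using v_antimono[of m "Suc m"] by (simp add: le_fun_def)
    show "v 0 j \<le> supn t" for j
      using supn_upper[OF \<open>t \<in> linf_pos\<close>, of j] by (simp add: v_def)
    show "\<exists>j\<in>S. v (Suc m) j \<le> v m j - \<eta>" if "m < n" for m
    proof -
      have "v n i \<le> v m i"
        using v_antimono[of m n] that by (simp add: le_fun_def)
      then have "\<epsilon> \<le> v m i"
        using large by (simp add: v_def)
      moreover have "v m \<le> t"
        using v_antimono[of 0 m] by (simp add: v_def)
      ultimately show ?thesis
        using descent[OF v_linf_pos] by (simp add: v_def)
    qed
  qed
qed

lemma Psi_orbit_vanishes:
  fixes T :: "('i \<Rightarrow> real) \<Rightarrow> ('i \<Rightarrow> real)"
  assumes mono: "mono_on linf_pos T" and self: "T ` linf_pos \<subseteq> linf_pos"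
    and t: "t \<in> Psi T" and "uniform_descent_below T t"
  shows "(\<lambda>n. supn ((T ^^ n) t)) \<longlonglongrightarrow> 0"
proof (rule LIMSEQ_I)
  fix \<epsilon> :: real
  assume "0 < \<epsilon>"
  have "\<exists>\<eta>>0. \<exists>C::nat. \<forall>i. \<exists>S. finite S \<and> card S \<le> C \<and>
      (\<forall>s\<in>linf_pos. s \<le> t \<longrightarrow> \<epsilon> / 2 \<le> s i \<longrightarrow> (\<exists>j\<in>S. T s j \<le> s j - \<eta>))"
    by (rule assms(4)[unfolded uniform_descent_below_def, rule_format]) (simp add: \<open>0 < \<epsilon>\<close>)
  then obtain \<eta> C where "\<eta> > 0" and C: "\<forall>i. \<exists>S. finite S \<and> card S \<le> C \<and>
      (\<forall>s\<in>linf_pos. s \<le> t \<longrightarrow> \<epsilon> / 2 \<le> s i \<longrightarrow> (\<exists>j\<in>S. T s j \<le> s j - \<eta>))"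
    by blast
  have "t \<in> linf_pos"
    using t by (simp add: Psi_def)
  obtain N :: nat where N: "real C * supn t / \<eta> < N"
    using reals_Archimedean2 by blast
  have small: "(T ^^ n) t i < \<epsilon> / 2" if "N \<le> n" for n i
  proof (rule ccontr)
    assume "\<not> (T ^^ n) t i < \<epsilon> / 2"
    then have large: "\<epsilon> / 2 \<le> (T ^^ n) t i"
      by simp
    obtain S where "finite S" "card S \<le> C"
      and S_descent: "\<forall>s\<in>linf_pos. s \<le> t \<longrightarrow> \<epsilon> / 2 \<le> s i \<longrightarrow> (\<exists>j\<in>S. T s j \<le> s j - \<eta>)"
      using C by blast
    have "real n * \<eta> \<le> real (card S) * supn t"
      by (rule Psi_orbit_steps_bound[OF mono self t \<open>finite S\<close> _ large]) (rule S_descent[rule_format])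
    also have "\<dots> \<le> real C * supn t"
      using \<open>card S \<le> C\<close> supn_nonneg[OF \<open>t \<in> linf_pos\<close>] by (simp add: mult_right_mono)
    also have "\<dots> < real N * \<eta>"
      using N \<open>\<eta> > 0\<close> by (simp add: field_simps)
    also have "\<dots> \<le> real n * \<eta>"
      using \<open>N \<le> n\<close> \<open>\<eta> > 0\<close> by simp
    finally show False by simp
  qed
  show "\<exists>N. \<forall>n\<ge>N. norm (supn ((T ^^ n) t) - 0) < \<epsilon>"
  proof (intro exI allI impI)
    fix n
    assume "N \<le> n"
    have orbit: "(T ^^ n) t \<in> linf_pos"
      using funpow_linf_pos[OF self \<open>t \<in> linf_pos\<close>] .
    have "supn ((T ^^ n) t) \<le> \<epsilon> / 2"
      using small[OF \<open>N \<le> n\<close>] orbit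
      by (intro supn_least) (simp add: linf_pos_nonneg less_imp_le)
    then show "norm (supn ((T ^^ n) t) - 0) < \<epsilon>"
      using supn_nonneg[OF orbit] \<open>0 < \<epsilon>\<close> by simp
  qed
qed

lemma self_map_if_cofinal_Psi:
  fixes T :: "('i \<Rightarrow> real) \<Rightarrow> ('i \<Rightarrow> real)"
  assumes "mono_on linf_pos T" "\<And>s i. s \<in> linf_pos \<Longrightarrow> 0 \<le> T s i" "cofinal_set (Psi T)"
  shows "T ` linf_pos \<subseteq> linf_pos"
proof clarify
  fix s :: "'i \<Rightarrow> real"
  assume "s \<in> linf_pos"
  then obtain t where t: "t \<in> Psi T" "s \<le> t"
    using assms(3) by (auto simp: cofinal_set_def le_fun_def)
  then have "t \<in> linf_pos"
    by (simp add: Psi_def)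
  have "T s \<le> T t"
    using mono_onD[OF assms(1) \<open>s \<in> linf_pos\<close> \<open>t \<in> linf_pos\<close> \<open>s \<le> t\<close>] .
  also have "T t \<le> t"
    using t by (simp add: Psi_def le_fun_def)
  finally have "T s \<le> t" .
  then show "T s \<in> linf_pos"
    using assms(2) \<open>s \<in> linf_pos\<close> \<open>t \<in> linf_pos\<close> by (simp add: linf_pos_dominated)
qed

lemma GATT_if_uniform_descent_below_Psi:
  fixes T :: "('i \<Rightarrow> real) \<Rightarrow> ('i \<Rightarrow> real)"
  assumes mono: "mono_on linf_pos T" and nonneg: "\<And>s i. s \<in> linf_pos \<Longrightarrow> 0 \<le> T s i"
    and cofinal: "cofinal_set (Psi T)"
    and descent: "\<And>t. t \<in> Psi T \<Longrightarrow> uniform_descent_below T t"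
  shows "GATT T"
  unfolding GATT_def
proof
  fix s :: "'i \<Rightarrow> real"
  assume "s \<in> linf_pos"
  have self: "T ` linf_pos \<subseteq> linf_pos"
    by (rule self_map_if_cofinal_Psi[OF mono _ cofinal]) (rule nonneg)
  obtain t where t: "t \<in> Psi T" "s \<le> t"
    using cofinal \<open>s \<in> linf_pos\<close> by (auto simp: cofinal_set_def le_fun_def)
  then have "t \<in> linf_pos"
    by (simp add: Psi_def)
  show "(\<lambda>n. supn ((T ^^ n) s)) \<longlonglongrightarrow> 0"
  proof (rule tendsto_sandwich[OF always_eventually always_eventually tendsto_const
        Psi_orbit_vanishes[OF mono self t(1) descent[OF t(1)]]])
    show "\<forall>n. 0 \<le> supn ((T ^^ n) s)"
      using supn_nonneg funpow_linf_pos[OF self \<open>s \<in> linf_pos\<close>] by blast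
    show "\<forall>n. supn ((T ^^ n) s) \<le> supn ((T ^^ n) t)"
    proof
      fix n
      show "supn ((T ^^ n) s) \<le> supn ((T ^^ n) t)"
      proof (rule supn_mono)
        show "0 \<le> (T ^^ n) s i" for i
          using funpow_linf_pos[OF self \<open>s \<in> linf_pos\<close>] by (rule linf_pos_nonneg)
        show "(T ^^ n) s \<le> (T ^^ n) t"
          using funpow_mono_on_linf_pos[OF mono self] \<open>s \<in> linf_pos\<close> \<open>t \<in> linf_pos\<close> t(2)
          by (rule mono_onD)
        show "(T ^^ n) t \<in> linf_pos"
          using funpow_linf_pos[OF self \<open>t \<in> linf_pos\<close>] .
      qed
    qed
  qed
qed

definition gain_vector :: "('i \<Rightarrow> 'i set) \<Rightarrow> ('i \<Rightarrow> 'i \<Rightarrow> real \<Rightarrow> real) \<Rightarrow> ('i \<Rightarrow> real) \<Rightarrow> 'i \<Rightarrow> ('i \<Rightarrow> real)" where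
  "gain_vector Ii gam s i = (\<lambda>j. if j \<in> Ii i then gam i j (s j) else 0)"

lemma Gam_gain_vector: "Gam Ii gam mu s i = real_of_ereal (mu i (gain_vector Ii gam s i))"
  by (simp add: Gam_def gain_vector_def)

context
  fixes Ii :: "'i \<Rightarrow> 'i set" and gam :: "'i \<Rightarrow> 'i \<Rightarrow> real \<Rightarrow> real"
    and mu :: "'i \<Rightarrow> ('i \<Rightarrow> real) \<Rightarrow> ereal"
  assumes gain: "gain_operator Ii gam mu"
begin

lemma gain_operator_finite: "finite (Ii i)"
proof -
  have "\<forall>i. finite (Ii i) \<and> i \<notin> Ii i"
    using gain unfolding gain_operator_def by (elim conjE) assumption
  then show ?thesis by blast
qed

lemma gain_operator_Kinf: "j \<in> Ii i \<Longrightarrow> Kinf (gam i j)"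
proof -
  have "\<forall>i. \<forall>j\<in>Ii i. Kinf (gam i j)"
    using gain unfolding gain_operator_def by (elim conjE) assumption
  then show "j \<in> Ii i \<Longrightarrow> Kinf (gam i j)" by blast
qed

lemma mu_nonneg:
  assumes "s \<in> linf_pos"
  shows "0 \<le> mu i s"
proof -
  have "\<exists>\<xi>. Kinf \<xi> \<and> (\<forall>i. mu i (\<lambda>_. 0) = 0 \<and> (\<forall>s\<in>linf_pos. ereal (\<xi> (supn s)) \<le> mu i s))"
    using gain unfolding gain_operator_def by (elim conjE) assumption
  then obtain \<xi> where "Kinf \<xi>" and "ereal (\<xi> (supn s)) \<le> mu i s"
    using assms by blast
  have "0 \<le> ereal (\<xi> (supn s))"
    using Kinf_nonneg[OF \<open>Kinf \<xi>\<close> supn_nonneg[OF assms]] by simp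
  also have "\<dots> \<le> mu i s"
    by fact
  finally show ?thesis .
qed

lemma mu_mono: "s \<in> linf_pos \<Longrightarrow> t \<in> linf_pos \<Longrightarrow> s \<le> t \<Longrightarrow> mu i s \<le> mu i t"
proof -
  have "\<forall>i. \<forall>s\<in>linf_pos. \<forall>t\<in>linf_pos. (\<forall>k. s k \<le> t k) \<longrightarrow> mu i s \<le> mu i t"
    using gain unfolding gain_operator_def by (elim conjE) assumption
  then show "s \<in> linf_pos \<Longrightarrow> t \<in> linf_pos \<Longrightarrow> s \<le> t \<Longrightarrow> mu i s \<le> mu i t"
    by (simp add: le_fun_def)
qed

lemma mu_finite:
  assumes "finite J" "s \<in> linf_pos" "\<And>k. k \<notin> J \<Longrightarrow> s k = 0"
  shows "mu i s \<noteq> \<infinity>"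
proof -
  have "\<forall>i J. finite J \<longrightarrow> (\<forall>s\<in>linf_pos. (\<forall>k. k \<notin> J \<longrightarrow> s k = 0) \<longrightarrow>
      mu i s \<noteq> \<infinity> \<and>
      (\<forall>\<epsilon>>0. \<exists>\<delta>>0. \<forall>t\<in>linf_pos. (\<forall>k. k \<notin> J \<longrightarrow> t k = 0) \<longrightarrow>
         supn (\<lambda>k. t k - s k) < \<delta> \<longrightarrow>
         \<bar>real_of_ereal (mu i t) - real_of_ereal (mu i s)\<bar> < \<epsilon>))"
    using gain unfolding gain_operator_def by (elim conjE) assumption
  then show ?thesis
    using assms by blast
qed

lemma gain_vector_linf_pos:
  assumes "s \<in> linf_pos"
  shows "gain_vector Ii gam s i \<in> linf_pos"
proof -
  have nonneg: "0 \<le> gain_vector Ii gam s i j" for j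
    using linf_pos_nonneg[OF assms] gain_operator_Kinf Kinf_nonneg by (simp add: gain_vector_def)
  have "range (\<lambda>j. \<bar>gain_vector Ii gam s i j\<bar>) \<subseteq> insert 0 ((\<lambda>j. \<bar>gam i j (s j)\<bar>) ` Ii i)"
    by (auto simp: gain_vector_def)
  moreover have "bdd_above (insert 0 ((\<lambda>j. \<bar>gam i j (s j)\<bar>) ` Ii i))"
    using gain_operator_finite by (simp add: bdd_above_finite)
  ultimately have "bdd_above (range (\<lambda>j. \<bar>gain_vector Ii gam s i j\<bar>))"
    by (rule bdd_above_mono[rotated])
  then show ?thesis
    using nonneg by (simp add: linf_pos_def)
qed

lemma gain_vector_mono:
  assumes "s \<in> linf_pos" "s \<le> t"
  shows "gain_vector Ii gam s i \<le> gain_vector Ii gam t i"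
proof (rule le_funI)
  fix j
  have "gam i j (s j) \<le> gam i j (t j)" if "j \<in> Ii i"
    using Kinf_mono[OF gain_operator_Kinf[OF that] linf_pos_nonneg[OF assms(1)]] assms(2)
    by (simp add: le_fun_def)
  then show "gain_vector Ii gam s i j \<le> gain_vector Ii gam t i j"
    by (simp add: gain_vector_def)
qed

lemma Gam_nonneg: "s \<in> linf_pos \<Longrightarrow> 0 \<le> Gam Ii gam mu s i"
  by (simp add: Gam_gain_vector mu_nonneg gain_vector_linf_pos real_of_ereal_pos)

lemma Gam_mono: "mono_on linf_pos (Gam Ii gam mu)"
proof (intro mono_onI le_funI)
  fix s t :: "'i \<Rightarrow> real" and i
  assume "s \<in> linf_pos" "t \<in> linf_pos" "s \<le> t"
  have "mu i (gain_vector Ii gam t i) \<noteq> \<infinity>"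
    using gain_operator_finite[of i] gain_vector_linf_pos[OF \<open>t \<in> linf_pos\<close>]
    by (rule mu_finite) (simp add: gain_vector_def)
  moreover have "0 \<le> mu i (gain_vector Ii gam s i)"
    using mu_nonneg gain_vector_linf_pos \<open>s \<in> linf_pos\<close> by blast
  moreover have "mu i (gain_vector Ii gam s i) \<le> mu i (gain_vector Ii gam t i)"
    using gain_vector_linf_pos[OF \<open>s \<in> linf_pos\<close>] gain_vector_linf_pos[OF \<open>t \<in> linf_pos\<close>]
      gain_vector_mono[OF \<open>s \<in> linf_pos\<close> \<open>s \<le> t\<close>]
    by (rule mu_mono)
  ultimately show "Gam Ii gam mu s i \<le> Gam Ii gam mu t i"
    unfolding Gam_gain_vector by (simp add: real_of_ereal_positive_mono)
qed

lemma Gam_rho_nonneg: "Kinf \<rho> \<Longrightarrow> s \<in> linf_pos \<Longrightarrow> 0 \<le> Gam_rho \<rho> Ii gam mu s i"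
  using Gam_nonneg[of s i] Kinf_nonneg[of \<rho> "Gam Ii gam mu s i"] by (simp add: Gam_rho_def)

lemma Gam_rho_mono:
  assumes "Kinf \<rho>"
  shows "mono_on linf_pos (Gam_rho \<rho> Ii gam mu)"
proof (intro mono_onI le_funI)
  fix s t :: "'i \<Rightarrow> real" and i
  assume "s \<in> linf_pos" "t \<in> linf_pos" "s \<le> t"
  then have "Gam Ii gam mu s i \<le> Gam Ii gam mu t i"
    using Gam_mono by (simp add: mono_on_def le_fun_def)
  moreover have "\<rho> (Gam Ii gam mu s i) \<le> \<rho> (Gam Ii gam mu t i)"
    using Kinf_mono[OF assms Gam_nonneg[OF \<open>s \<in> linf_pos\<close>] calculation] .
  ultimately show "Gam_rho \<rho> Ii gam mu s i \<le> Gam_rho \<rho> Ii gam mu t i"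
    by (simp add: Gam_rho_def)
qed

lemma Gam_rho_half_le:
  "Kinf \<rho> \<Longrightarrow> s \<in> linf_pos \<Longrightarrow> Gam_rho (\<lambda>x. \<rho> x / 2) Ii gam mu s \<le> Gam_rho \<rho> Ii gam mu s"
  using Gam_nonneg[of s] Kinf_nonneg[of \<rho>] by (simp add: Gam_rho_def le_fun_def)

lemma Gam_rho_half_descent:
  assumes "Kinf \<rho>" "s \<in> linf_pos" "0 < \<delta>" "\<delta> \<le> s j" "Gam_rho \<rho> Ii gam mu s j < s j"
  shows "Gam_rho (\<lambda>x. \<rho> x / 2) Ii gam mu s j \<le> s j - min (\<rho> (\<delta> / 2) / 2) (\<delta> / 4)"
  using Kinf_half_step_descent[OF assms(1,3,4) Gam_nonneg[OF assms(2)]] assms(5)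
  unfolding Gam_rho_def by simp

lemma Psi_Gam_rho_subset_half:
  assumes "Kinf \<rho>"
  shows "Psi (Gam_rho \<rho> Ii gam mu) \<subseteq> Psi (Gam_rho (\<lambda>x. \<rho> x / 2) Ii gam mu)"
proof
  fix t
  assume "t \<in> Psi (Gam_rho \<rho> Ii gam mu)"
  then have "t \<in> linf_pos" "Gam_rho \<rho> Ii gam mu t \<le> t"
    by (simp_all add: Psi_def le_fun_def)
  then have "Gam_rho (\<lambda>x. \<rho> x / 2) Ii gam mu t \<le> t"
    using Gam_rho_half_le[OF assms] order_trans by blast
  with \<open>t \<in> linf_pos\<close> show "t \<in> Psi (Gam_rho (\<lambda>x. \<rho> x / 2) Ii gam mu)"
    by (simp add: Psi_def le_fun_def)
qed

lemma uniform_descent_below_Gam_rho_half: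
  assumes "Kinf \<rho>" and NJI: "uniform_NJI Ii (Gam_rho \<rho> Ii gam mu)"
    and degree: "\<And>i. card (Ii i) \<le> D" and t: "t \<in> linf_pos"
  shows "uniform_descent_below (Gam_rho (\<lambda>x. \<rho> x / 2) Ii gam mu) t"
  unfolding uniform_descent_below_def
proof (intro allI impI)
  fix \<epsilon> :: real
  assume "0 < \<epsilon>"
  have "0 < supn t + 1"
    using supn_nonneg[OF t] by simp
  then obtain n \<delta> where "0 < \<delta>" and NJI_at: "\<forall>s\<in>linf_pos. \<forall>i. \<epsilon> \<le> s i \<longrightarrow> supn s \<le> supn t + 1 \<longrightarrow>
      (\<exists>j\<in>Nminus Ii i n. \<delta> \<le> s j \<and> Gam_rho \<rho> Ii gam mu s j < s j)"
    using NJI[unfolded uniform_NJI_def, rule_format, of "supn t + 1" \<epsilon>] \<open>0 < \<epsilon>\<close> by blast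
  obtain C where C: "\<forall>i. finite (Nminus Ii i n) \<and> card (Nminus Ii i n) \<le> C"
    using Nminus_card_bound[of Ii, OF gain_operator_finite degree] by blast
  define \<eta> where "\<eta> = min (\<rho> (\<delta> / 2) / 2) (\<delta> / 4)"
  have "0 < \<eta>"
    using Kinf_pos[OF assms(1)] \<open>0 < \<delta>\<close> by (simp add: \<eta>_def)
  moreover have "\<exists>j\<in>Nminus Ii i n. Gam_rho (\<lambda>x. \<rho> x / 2) Ii gam mu s j \<le> s j - \<eta>"
    if s: "s \<in> linf_pos" and "s \<le> t" and large: "\<epsilon> \<le> s i" for s i
  proof -
    have "supn s \<le> supn t + 1"
      using supn_mono[OF linf_pos_nonneg[OF s] \<open>s \<le> t\<close> t] by linarith
    then obtain j where "j \<in> Nminus Ii i n" "\<delta> \<le> s j" "Gam_rho \<rho> Ii gam mu s j < s j"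
      using NJI_at s large by blast
    then show ?thesis
      using Gam_rho_half_descent[OF assms(1) s \<open>0 < \<delta>\<close>] unfolding \<eta>_def by blast
  qed
  ultimately show "\<exists>\<eta>>0. \<exists>C. \<forall>i. \<exists>S. finite S \<and> card S \<le> C \<and>
      (\<forall>s\<in>linf_pos. s \<le> t \<longrightarrow> \<epsilon> \<le> s i \<longrightarrow> (\<exists>j\<in>S. Gam_rho (\<lambda>x. \<rho> x / 2) Ii gam mu s j \<le> s j - \<eta>))"
    using C by blast
qed

end

theorem proposition2p20:
  fixes Ii :: "'i::countable \<Rightarrow> 'i set"
    and gam :: "'i \<Rightarrow> 'i \<Rightarrow> real \<Rightarrow> real"
    and mu :: "'i \<Rightarrow> ('i \<Rightarrow> real) \<Rightarrow> ereal"
    and \<rho> :: "real \<Rightarrow> real"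
    and M :: real
  assumes "gain_operator Ii gam mu"
    and "Kinf \<rho>"
    and "cofinal_set (Psi (Gam_rho \<rho> Ii gam mu))"
    and "uniform_NJI Ii (Gam_rho \<rho> Ii gam mu)"
    and "M > 0" and "\<forall>i. real (card (Ii i)) \<le> M"
  shows "\<exists>\<rho>'. Kinf \<rho>' \<and> GATT (Gam_rho \<rho>' Ii gam mu)"
proof -
  let ?T' = "Gam_rho (\<lambda>x. \<rho> x / 2) Ii gam mu"
  have half: "Kinf (\<lambda>x. \<rho> x / 2)"
    using Kinf_divide[OF assms(2)] by simp
  have degree: "card (Ii i) \<le> nat \<lceil>M\<rceil>" for i
    using assms(6) le_nat_ceiling by blast
  have "GATT ?T'"
  proof (rule GATT_if_uniform_descent_below_Psi)
    show "mono_on linf_pos ?T'"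
      using Gam_rho_mono[OF assms(1) half] .
    show "0 \<le> ?T' s i" if "s \<in> linf_pos" for s i
      using Gam_rho_nonneg[OF assms(1) half that] .
    show "cofinal_set (Psi ?T')"
      using assms(3) Psi_Gam_rho_subset_half[OF assms(1,2)] unfolding cofinal_set_def by blast
    show "uniform_descent_below ?T' t" if "t \<in> Psi ?T'" for t
      using that uniform_descent_below_Gam_rho_half[OF assms(1,2,4) degree]
      by (simp add: Psi_def)
  qed
  then show ?thesis
    using half by blast
qed

end
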